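(* Let $G=(V,E)$ be a simple undirected graph with $V=[n]$ and let $k\ge1$ be an integer such that $\alpha_k(G)=k\,\vartheta(G)$. Then $$\vartheta_k(G)=\vartheta'_k(G)=\theta^1_k(G)=\theta^2_k(G)=\theta^3_k(G)=k\,\alpha(G)=\alpha_k(G).$$
   Context: $\alpha(G)$ is the stability number; $\alpha_k(G)$ is the maximum number of vertices of an induced $k$-colorable subgraph of $G$. $J$ is the all-ones matrix, $\langle A,B\rangle=\mathrm{trace}(AB)$, $\ge0$ entrywise, $\succeq0$ positive semidefinite, $\mathbb S^m$ symmetric $m\times m$ matrices. $\vartheta(G)=\max\{\langle J,Z\rangle: Z\in\mathbb S^n,\ Z_{ij}=0\ (\{i,j\}\in E),\ \langle I,Z\rangle=1,\ Z\succeq 0\}$ (Lovász number). $\vartheta_k(G)=\max\{\langle J,Z\rangle: Z\in\mathbb S^n,\ Z_{ij}=0\ (\{i,j\}\in E),\ \langle I,Z\rangle=k,\ Z\succeq0,\ I-Z\succeq0\}$, and $\vartheta'_k(G)$ is the same with the additional constraint $Z\ge0$. $\theta^1_k(G)=\max\langle I,Z\rangle$ over $Z,X\in\mathbb S^n$ subject to $Z_{ij}=0$ for $\{i,j\}\in E$; $X_{ii}=0$ for $i\in[n]$; $Z,X\ge0$; $Z-X\succeq0$; $\begin{bmatrix}1&\mathrm{diag}(Z)^{\top}\\ \mathrm{diag}(Z)&Z+(k-1)X\end{bmatrix}\succeq0$; $1-Z_{ii}-Z_{jj}+Z_{ij}+(k-1)X_{ij}\ge0$ for $i>j$; $Z_{ii}-Z_{ij}-(k-1)X_{ij}\ge0$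 for $i\ne j$. $\theta^2_k(G)$ is the optimal value of the same problem without the last two families of linear inequalities. $\theta^3_k(G)=\max\{\langle I,Z\rangle: Z\in\mathbb S^n,\ Z_{ij}=0\ (\{i,j\}\in E),\ Z_{ii}\le1,\ Z\ge0,\ \begin{bmatrix}k&\mathrm{diag}(Z)^{\top}\\ \mathrm{diag}(Z)&Z\end{bmatrix}\succeq0\}$. *)

theory Defs
  imports Complex_Main
begin

(* Graphs: vertex set [n] = {0..<n}; edges given by a relation E (assumed symmetric,
   irreflexive in the theorem). Matrices: functions nat => nat => real, only entries
   with indices < m matter. *)

definition stable_set :: "nat \<Rightarrow> (nat \<Rightarrow> nat \<Rightarrow> bool) \<Rightarrow> nat set \<Rightarrow> bool" where
  "stable_set n E S \<longleftrightarrow> S \<subseteq> {0..<n} \<and> (\<forall>i\<in>S. \<forall>j\<in>S. \<not> E i j)"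

definition k_colorable_set :: "nat \<Rightarrow> (nat \<Rightarrow> nat \<Rightarrow> bool) \<Rightarrow> nat \<Rightarrow> nat set \<Rightarrow> bool" where
  "k_colorable_set n E k S \<longleftrightarrow> S \<subseteq> {0..<n} \<and>
     (\<exists>c :: nat \<Rightarrow> nat. (\<forall>i\<in>S. c i < k) \<and> (\<forall>i\<in>S. \<forall>j\<in>S. E i j \<longrightarrow> c i \<noteq> c j))"

definition alpha :: "nat \<Rightarrow> (nat \<Rightarrow> nat \<Rightarrow> bool) \<Rightarrow> nat" where
  "alpha n E = Max (card ` {S. stable_set n E S})"

definition alpha_k :: "nat \<Rightarrow> (nat \<Rightarrow> nat \<Rightarrow> bool) \<Rightarrow> nat \<Rightarrow> nat" where
  "alpha_k n E k = Max (card ` {S. k_colorable_set n E k S})"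

definition symm :: "nat \<Rightarrow> (nat \<Rightarrow> nat \<Rightarrow> real) \<Rightarrow> bool" where
  "symm m A \<longleftrightarrow> (\<forall>i<m. \<forall>j<m. A i j = A j i)"

definition psd :: "nat \<Rightarrow> (nat \<Rightarrow> nat \<Rightarrow> real) \<Rightarrow> bool" where
  "psd m A \<longleftrightarrow> symm m A \<and> (\<forall>x :: nat \<Rightarrow> real. (\<Sum>i<m. \<Sum>j<m. x i * A i j * x j) \<ge> 0)"

definition nonneg :: "nat \<Rightarrow> (nat \<Rightarrow> nat \<Rightarrow> real) \<Rightarrow> bool" where
  "nonneg m A \<longleftrightarrow> (\<forall>i<m. \<forall>j<m. A i j \<ge> 0)"

definition idm :: "nat \<Rightarrow> nat \<Rightarrow> real" where
  "idm i j = (if i = j then 1 else 0)"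

definition trace_m :: "nat \<Rightarrow> (nat \<Rightarrow> nat \<Rightarrow> real) \<Rightarrow> real" where
  "trace_m m A = (\<Sum>i<m. A i i)"

definition sum_all :: "nat \<Rightarrow> (nat \<Rightarrow> nat \<Rightarrow> real) \<Rightarrow> real" where
  "sum_all m A = (\<Sum>i<m. \<Sum>j<m. A i j)"

definition zero_on_edges :: "nat \<Rightarrow> (nat \<Rightarrow> nat \<Rightarrow> bool) \<Rightarrow> (nat \<Rightarrow> nat \<Rightarrow> real) \<Rightarrow> bool" where
  "zero_on_edges n E Z \<longleftrightarrow> (\<forall>i<n. \<forall>j<n. E i j \<longrightarrow> Z i j = 0)"

(* the (m+1) x (m+1) matrix [[c, d^T],[d, M]] *)
definition bordered :: "real \<Rightarrow> (nat \<Rightarrow> real) \<Rightarrow> (nat \<Rightarrow> nat \<Rightarrow> real) \<Rightarrow> nat \<Rightarrow> nat \<Rightarrow> real" where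
  "bordered c d M i j = (if i = 0 \<and> j = 0 then c else if i = 0 then d (j - 1)
      else if j = 0 then d (i - 1) else M (i - 1) (j - 1))"

definition lovasz_theta :: "nat \<Rightarrow> (nat \<Rightarrow> nat \<Rightarrow> bool) \<Rightarrow> real" where
  "lovasz_theta n E = Sup {sum_all n Z | Z. symm n Z \<and> zero_on_edges n E Z \<and>
      trace_m n Z = 1 \<and> psd n Z}"

definition vartheta_k :: "nat \<Rightarrow> (nat \<Rightarrow> nat \<Rightarrow> bool) \<Rightarrow> nat \<Rightarrow> real" where
  "vartheta_k n E k = Sup {sum_all n Z | Z. symm n Z \<and> zero_on_edges n E Z \<and>
      trace_m n Z = real k \<and> psd n Z \<and> psd n (\<lambda>i j. idm i j - Z i j)}"

definition vartheta'_k :: "nat \<Rightarrow> (nat \<Rightarrow> nat \<Rightarrow> bool) \<Rightarrow> nat \<Rightarrow> real" where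
  "vartheta'_k n E k = Sup {sum_all n Z | Z. symm n Z \<and> zero_on_edges n E Z \<and>
      trace_m n Z = real k \<and> psd n Z \<and> psd n (\<lambda>i j. idm i j - Z i j) \<and> nonneg n Z}"

definition theta2_feas :: "nat \<Rightarrow> (nat \<Rightarrow> nat \<Rightarrow> bool) \<Rightarrow> nat \<Rightarrow>
    (nat \<Rightarrow> nat \<Rightarrow> real) \<Rightarrow> (nat \<Rightarrow> nat \<Rightarrow> real) \<Rightarrow> bool" where
  "theta2_feas n E k Z X \<longleftrightarrow> symm n Z \<and> symm n X \<and> zero_on_edges n E Z \<and>
      (\<forall>i<n. X i i = 0) \<and> nonneg n Z \<and> nonneg n X \<and>
      psd n (\<lambda>i j. Z i j - X i j) \<and>
      psd (n + 1) (bordered 1 (\<lambda>i. Z i i) (\<lambda>i j. Z i j + (real k - 1) * X i j))"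

definition theta2_k :: "nat \<Rightarrow> (nat \<Rightarrow> nat \<Rightarrow> bool) \<Rightarrow> nat \<Rightarrow> real" where
  "theta2_k n E k = Sup {trace_m n Z | Z X. theta2_feas n E k Z X}"

definition theta1_k :: "nat \<Rightarrow> (nat \<Rightarrow> nat \<Rightarrow> bool) \<Rightarrow> nat \<Rightarrow> real" where
  "theta1_k n E k = Sup {trace_m n Z | Z X. theta2_feas n E k Z X \<and>
      (\<forall>i<n. \<forall>j<n. i > j \<longrightarrow> 1 - Z i i - Z j j + Z i j + (real k - 1) * X i j \<ge> 0) \<and>
      (\<forall>i<n. \<forall>j<n. i \<noteq> j \<longrightarrow> Z i i - Z i j - (real k - 1) * X i j \<ge> 0)}"

definition theta3_k :: "nat \<Rightarrow> (nat \<Rightarrow> nat \<Rightarrow> bool) \<Rightarrow> nat \<Rightarrow> real" where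
  "theta3_k n E k = Sup {trace_m n Z | Z. symm n Z \<and> zero_on_edges n E Z \<and>
      (\<forall>i<n. Z i i \<le> 1) \<and> nonneg n Z \<and>
      psd (n + 1) (bordered (real k) (\<lambda>i. Z i i) Z)}"

end

theory Submission
  imports Defs "HOL-Library.Indicator_Function" "HOL-Analysis.Convex"
begin

(* Every relaxation is at most k * theta(G). For vartheta_k and vartheta'_k this is
   <J,Z> <= theta(G) * tr Z, valid for every psd Z vanishing on the edges (rescale Z to
   trace 1). For theta^1_k, theta^2_k and theta^3_k the bordered psd constraint yields
   (tr Z)^2 <= k <J,Z>, hence tr Z <= k * theta(G).
   Conversely alpha <= theta and alpha_k <= k * alpha, so the hypothesis alpha_k = k * theta
   forces theta = alpha and alpha_k = k * alpha. Then a maximum k-colorable set splits into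
   k stable sets of size exactly alpha, and the 0/1 matrix of "same color" pairs (divided by
   alpha for vartheta_k), together with the normalized matrix of "different color" pairs for
   theta^1_k and theta^2_k, is feasible with value k * alpha in every relaxation. *)

section \<open>Quadratic forms and positive semidefinite matrices\<close>

definition quad_form :: "nat \<Rightarrow> (nat \<Rightarrow> nat \<Rightarrow> real) \<Rightarrow> (nat \<Rightarrow> real) \<Rightarrow> real" where
  "quad_form m A x = (\<Sum>i<m. \<Sum>j<m. x i * A i j * x j)"

lemma psd_iff_quad_form: "psd m A \<longleftrightarrow> symm m A \<and> (\<forall>x. 0 \<le> quad_form m A x)"
  by (simp add: psd_def quad_form_def)

lemma sum_all_eq_quad_form: "sum_all m A = quad_form m A (\<lambda>_. 1)"
  by (simp add: sum_all_def quad_form_def)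

lemma quad_form_lincomb:
  "quad_form m (\<lambda>i j. a * A i j + b * B i j) x = a * quad_form m A x + b * quad_form m B x"
  unfolding quad_form_def by (simp add: algebra_simps sum.distrib sum_distrib_left)

lemma quad_form_diff:
  "quad_form m (\<lambda>i j. A i j - B i j) x = quad_form m A x - quad_form m B x"
  using quad_form_lincomb[of m 1 A "-1" B x] by simp

lemma quad_form_bordered:
  "quad_form (Suc m) (bordered c d M) x =
     c * (x 0)\<^sup>2 + 2 * x 0 * (\<Sum>i<m. d i * x (Suc i)) + quad_form m M (\<lambda>i. x (Suc i))"
  unfolding quad_form_def
  by (simp only: sum.lessThan_Suc_shift)
    (simp add: bordered_def sum.distrib sum_distrib_left sum_distrib_right power2_eq_square
      algebra_simps)

lemma quad_form_idm: "quad_form m idm x = (\<Sum>i<m. (x i)\<^sup>2)"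
proof -
  have idm: "idm i j = of_bool (i = j)" for i j
    by (simp add: idm_def)
  show ?thesis
    by (simp add: quad_form_def idm power2_eq_square mult.assoc flip: sum_distrib_left)
qed

definition gram :: "'c set \<Rightarrow> ('c \<Rightarrow> nat \<Rightarrow> real) \<Rightarrow> nat \<Rightarrow> nat \<Rightarrow> real" where
  "gram C f i j = (\<Sum>c\<in>C. f c i * f c j)"

lemma gram_singleton: "gram {c} f = (\<lambda>i j. f c i * f c j)"
  by (simp add: gram_def fun_eq_iff)

lemma quad_form_gram: "quad_form m (gram C f) x = (\<Sum>c\<in>C. (\<Sum>i<m. f c i * x i)\<^sup>2)"
proof -
  have "quad_form m (gram C f) x = (\<Sum>i<m. \<Sum>j<m. \<Sum>c\<in>C. (f c i * x i) * (f c j * x j))"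
    unfolding quad_form_def gram_def by (simp add: sum_distrib_left sum_distrib_right algebra_simps)
  also have "\<dots> = (\<Sum>c\<in>C. \<Sum>i<m. \<Sum>j<m. (f c i * x i) * (f c j * x j))"
    by (subst sum.swap, rule sum.cong[OF refl], rule sum.swap)
  also have "\<dots> = (\<Sum>c\<in>C. (\<Sum>i<m. f c i * x i)\<^sup>2)"
    by (simp add: power2_eq_square sum_product)
  finally show ?thesis .
qed

lemma psd_gram: "psd m (gram C f)"
  by (auto simp: psd_iff_quad_form quad_form_gram symm_def gram_def mult.commute intro: sum_nonneg)

lemma bordered_gram:
  "bordered (real (card C)) (\<lambda>i. \<Sum>c\<in>C. f c i) (gram C f)
     = gram C (\<lambda>c t. if t = 0 then 1 else f c (t - 1))"
  by (auto simp: bordered_def gram_def fun_eq_iff)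

lemma psd_diag_nonneg:
  assumes "psd m A" "i < m"
  shows "0 \<le> A i i"
proof -
  have "0 \<le> quad_form m A (\<lambda>t. of_bool (t = i))"
    using assms(1) by (simp add: psd_iff_quad_form)
  with assms(2) show ?thesis by (simp add: quad_form_def mult.assoc flip: sum_distrib_left)
qed

lemma psd_trace_nonneg: "psd m A \<Longrightarrow> 0 \<le> trace_m m A"
  unfolding trace_m_def by (auto intro: sum_nonneg psd_diag_nonneg)

lemma psd_off_diag_le:
  assumes "psd m A" "i < m" "j < m"
  shows "2 * A i j \<le> A i i + A j j"
proof -
  have unit: "(\<Sum>a<m. \<Sum>b<m. of_bool (a = p) * A a b * of_bool (b = q)) = A p q"
    if "p < m" "q < m" for p q
    using that by (simp add: mult.assoc flip: sum_distrib_left)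
  have "0 \<le> quad_form m A (\<lambda>t. of_bool (t = i) - of_bool (t = j))"
    using assms(1) by (simp add: psd_iff_quad_form)
  also have "\<dots> = A i i - A i j - A j i + A j j"
    unfolding quad_form_def
    by (simp only: left_diff_distrib right_diff_distrib sum_subtractf unit assms(2,3))
  also have "A j i = A i j"
    using assms unfolding psd_def symm_def by blast
  finally show ?thesis by simp
qed

lemma sum_all_le_dim_mult_trace:
  assumes "psd m A"
  shows "sum_all m A \<le> real m * trace_m m A"
proof -
  have "2 * sum_all m A = (\<Sum>i<m. \<Sum>j<m. 2 * A i j)"
    by (simp add: sum_all_def sum_distrib_left)
  also have "\<dots> \<le> (\<Sum>i<m. \<Sum>j<m. A i i + A j j)"
    by (intro sum_mono) (use psd_off_diag_le[OF assms] in auto)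
  also have "\<dots> = 2 * (real m * trace_m m A)"
    by (simp add: trace_m_def sum.distrib sum_distrib_left)
  finally show ?thesis by simp
qed

lemma psd_bordered_lower_block:
  assumes "psd (Suc m) (bordered c d M)"
  shows "psd m M"
proof -
  have "symm (Suc m) (bordered c d M)"
    using assms by (simp add: psd_def)
  then have "bordered c d M (Suc i) (Suc j) = bordered c d M (Suc j) (Suc i)"
    if "i < m" "j < m" for i j
    using that unfolding symm_def by simp
  then have "M i j = M j i" if "i < m" "j < m" for i j
    using that by (simp add: bordered_def)
  then have "symm m M" by (simp add: symm_def)
  moreover have "0 \<le> quad_form m M x" for x
  proof -
    have "0 \<le> quad_form (Suc m) (bordered c d M) (\<lambda>t. if t = 0 then 0 else x (t - 1))"
      using assms psd_iff_quad_form by blast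
    then show ?thesis by (simp add: quad_form_bordered)
  qed
  ultimately show ?thesis by (simp add: psd_iff_quad_form)
qed

lemma psd_bordered_sum_sq_le:
  assumes "psd (Suc m) (bordered c d M)" "0 < c"
  shows "(\<Sum>i<m. d i)\<^sup>2 \<le> c * sum_all m M"
proof -
  define D where "D = (\<Sum>i<m. d i)"
  define s where "s = D / c"
  have "0 \<le> quad_form (Suc m) (bordered c d M) (\<lambda>t. if t = 0 then - s else 1)"
    using assms(1) by (simp add: psd_iff_quad_form)
  also have "\<dots> = c * s\<^sup>2 - 2 * s * D + sum_all m M"
    by (simp add: quad_form_bordered sum_all_eq_quad_form D_def)
  also have "\<dots> = sum_all m M - D\<^sup>2 / c"
    using assms(2) by (simp add: s_def power2_eq_square field_simps)
  finally show ?thesis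
    using assms(2) by (simp add: D_def pos_divide_le_eq mult.commute)
qed

lemma psd_scale:
  assumes "psd m A" "0 \<le> c"
  shows "psd m (\<lambda>i j. c * A i j)"
proof -
  have "quad_form m (\<lambda>i j. c * A i j) x = c * quad_form m A x" for x
    using quad_form_lincomb[of m c A 0 A x] by simp
  with assms show ?thesis
    by (simp add: psd_iff_quad_form symm_def)
qed

section \<open>Upper bounds through the Lovasz number\<close>

lemma lovasz_theta_values_bdd_above:
  "bdd_above {sum_all n Z | Z. symm n Z \<and> zero_on_edges n E Z \<and> trace_m n Z = 1 \<and> psd n Z}"
  by (rule bdd_aboveI[of _ "real n"]) (auto dest: sum_all_le_dim_mult_trace)

lemma sum_all_le_lovasz_theta_mult_trace:
  assumes "zero_on_edges n E Z" "psd n Z"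
  shows "sum_all n Z \<le> lovasz_theta n E * trace_m n Z"
proof (cases "trace_m n Z = 0")
  case True
  then show ?thesis using sum_all_le_dim_mult_trace[OF assms(2)] by simp
next
  case False
  define t where "t = trace_m n Z"
  have t_pos: "0 < t"
    using False psd_trace_nonneg[OF assms(2)] by (simp add: t_def)
  define W where "W = (\<lambda>i j. (1 / t) * Z i j)"
  have "psd n W"
    unfolding W_def by (rule psd_scale) (use assms(2) t_pos in auto)
  moreover have "zero_on_edges n E W"
    using assms(1) by (simp add: W_def zero_on_edges_def)
  moreover have "trace_m n W = 1"
    using t_pos by (simp add: W_def t_def trace_m_def flip: sum_divide_distrib)
  ultimately have "sum_all n W \<le> lovasz_theta n E"
    unfolding lovasz_theta_def
    by (intro cSup_upper[OF _ lovasz_theta_values_bdd_above]) (auto simp: psd_def)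
  moreover have "sum_all n W = sum_all n Z / t"
    by (simp add: W_def sum_all_def flip: sum_divide_distrib)
  ultimately show ?thesis
    using t_pos by (simp add: t_def field_simps)
qed

lemma power2_le_mult_imp_le:
  fixes t b :: real
  assumes "t\<^sup>2 \<le> b * t" "0 \<le> b"
  shows "t \<le> b"
  using assms by (cases "0 < t") (auto simp: power2_eq_square)

lemma theta3_trace_le:
  assumes "zero_on_edges n E Z" "psd (n + 1) (bordered (real k) (\<lambda>i. Z i i) Z)"
    and "0 < k" "0 \<le> lovasz_theta n E"
  shows "trace_m n Z \<le> real k * lovasz_theta n E"
proof (rule power2_le_mult_imp_le)
  have "psd n Z"
    using assms(2) by (simp add: psd_bordered_lower_block)
  have "(trace_m n Z)\<^sup>2 \<le> real k * sum_all n Z"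
    using psd_bordered_sum_sq_le[of n "real k"] assms(2,3) by (simp add: trace_m_def)
  also have "\<dots> \<le> real k * (lovasz_theta n E * trace_m n Z)"
    using sum_all_le_lovasz_theta_mult_trace[OF assms(1) \<open>psd n Z\<close>]
    by (intro mult_left_mono) simp_all
  finally show "(trace_m n Z)\<^sup>2 \<le> real k * lovasz_theta n E * trace_m n Z"
    by (simp add: mult.assoc)
qed (use assms(4) in simp)

lemma psd_of_theta2_feas:
  assumes "theta2_feas n E k Z X" "0 < k"
  shows "psd n Z"
proof -
  define M where "M = (\<lambda>i j. Z i j + (real k - 1) * X i j)"
  have "psd n M" "psd n (\<lambda>i j. Z i j - X i j)"
    using assms(1) psd_bordered_lower_block by (auto simp: theta2_feas_def M_def)
  then have "0 \<le> quad_form n M x + (real k - 1) * quad_form n (\<lambda>i j. Z i j - X i j) x" for x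
    using assms(2) by (simp add: psd_iff_quad_form)
  moreover have "quad_form n M x = quad_form n Z x + (real k - 1) * quad_form n X x" for x
    using quad_form_lincomb[of n 1 Z "real k - 1" X x] by (simp add: M_def)
  ultimately have "0 \<le> real k * quad_form n Z x" for x
    by (simp add: quad_form_diff algebra_simps)
  with assms show ?thesis
    by (simp add: psd_iff_quad_form theta2_feas_def zero_le_mult_iff)
qed

lemma theta2_trace_le:
  assumes "theta2_feas n E k Z X" "0 < k" "0 \<le> lovasz_theta n E"
  shows "trace_m n Z \<le> real k * lovasz_theta n E"
proof (rule power2_le_mult_imp_le)
  define M where "M = (\<lambda>i j. Z i j + (real k - 1) * X i j)"
  have zero: "zero_on_edges n E Z"
    and psd_diff: "psd n (\<lambda>i j. Z i j - X i j)"
    and psd_bordered: "psd (Suc n) (bordered 1 (\<lambda>i. Z i i) M)"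
    using assms(1) by (simp_all add: theta2_feas_def M_def)
  have "sum_all n X \<le> sum_all n Z"
    using psd_diff by (simp add: psd_iff_quad_form sum_all_eq_quad_form quad_form_diff)
  then have scaled: "(real k - 1) * sum_all n X \<le> (real k - 1) * sum_all n Z"
    using assms(2) by (intro mult_left_mono) simp_all
  have "(trace_m n Z)\<^sup>2 \<le> sum_all n M"
    using psd_bordered_sum_sq_le[OF psd_bordered] by (simp add: trace_m_def)
  also have "\<dots> = sum_all n Z + (real k - 1) * sum_all n X"
    using quad_form_lincomb[of n 1 Z "real k - 1" X] by (simp add: sum_all_eq_quad_form M_def)
  also have "\<dots> \<le> real k * sum_all n Z"
    using scaled by (simp add: algebra_simps)
  also have "\<dots> \<le> real k * (lovasz_theta n E * trace_m n Z)"
    using sum_all_le_lovasz_theta_mult_trace[OF zero psd_of_theta2_feas[OF assms(1,2)]]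
    by (intro mult_left_mono) simp_all
  finally show "(trace_m n Z)\<^sup>2 \<le> real k * lovasz_theta n E * trace_m n Z"
    by (simp add: mult.assoc)
qed (use assms(3) in simp)

section \<open>Stable sets and \<open>k\<close>-colorable sets\<close>

lemma finite_stable_sets: "finite {S. stable_set n E S}"
  by (rule finite_subset[of _ "Pow {0..<n}"]) (auto simp: stable_set_def)

lemma finite_k_colorable_sets: "finite {S. k_colorable_set n E k S}"
  by (rule finite_subset[of _ "Pow {0..<n}"]) (auto simp: k_colorable_set_def)

lemma card_le_alpha: "stable_set n E S \<Longrightarrow> card S \<le> alpha n E"
  unfolding alpha_def using finite_stable_sets by (intro Max_ge) auto

lemma alpha_attained:
  obtains S where "stable_set n E S" "card S = alpha n E"
proof -
  have "{} \<in> {S. stable_set n E S}"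
    by (simp add: stable_set_def)
  then have "alpha n E \<in> card ` {S. stable_set n E S}"
    unfolding alpha_def using finite_stable_sets by (intro Max_in) auto
  then show ?thesis using that by auto
qed

lemma alpha_k_attained:
  obtains S where "k_colorable_set n E k S" "card S = alpha_k n E k"
proof -
  have "{} \<in> {S. k_colorable_set n E k S}"
    by (simp add: k_colorable_set_def)
  then have "alpha_k n E k \<in> card ` {S. k_colorable_set n E k S}"
    unfolding alpha_k_def using finite_k_colorable_sets by (intro Max_in) auto
  then show ?thesis using that by auto
qed

lemma alpha_pos: "i < n \<Longrightarrow> \<not> E i i \<Longrightarrow> 0 < alpha n E"
  using card_le_alpha[of n E "{i}"] by (simp add: stable_set_def)

lemma color_class_stable:
  assumes "S \<subseteq> {0..<n}" "\<forall>i\<in>S. \<forall>j\<in>S. E i j \<longrightarrow> col i \<noteq> col j"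
  shows "stable_set n E {i\<in>S. col i = c}"
  using assms unfolding stable_set_def by blast

lemma card_eq_sum_card_color_classes:
  fixes col :: "'a \<Rightarrow> nat"
  assumes "finite S" "\<forall>i\<in>S. col i < k"
  shows "card S = (\<Sum>c<k. card {i\<in>S. col i = c})"
proof -
  have "S = (\<Union>c<k. {i\<in>S. col i = c})"
    using assms(2) by auto
  also have "card \<dots> = (\<Sum>c<k. card {i\<in>S. col i = c})"
    by (rule card_UN_disjoint) (use assms(1) in auto)
  finally show ?thesis .
qed

lemma alpha_k_le_mult_alpha: "alpha_k n E k \<le> k * alpha n E"
proof -
  obtain S where S: "k_colorable_set n E k S" "card S = alpha_k n E k"
    by (rule alpha_k_attained)
  then obtain col where col: "\<forall>i\<in>S. col i < k" "\<forall>i\<in>S. \<forall>j\<in>S. E i j \<longrightarrow> col i \<noteq> col j"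
    and sub: "S \<subseteq> {0..<n}"
    unfolding k_colorable_set_def by blast
  have "alpha_k n E k = (\<Sum>c<k. card {i\<in>S. col i = c})"
    using card_eq_sum_card_color_classes[OF finite_subset[OF sub] col(1)] S(2) by simp
  also have "\<dots> \<le> (\<Sum>c<k. alpha n E)"
    by (intro sum_mono card_le_alpha color_class_stable[OF sub col(2)])
  finally show ?thesis by simp
qed

lemma sum_eq_bound_imp_eq:
  fixes f :: "'a \<Rightarrow> nat"
  assumes "finite A" "sum f A = card A * b" "\<And>x. x \<in> A \<Longrightarrow> f x \<le> b" "x \<in> A"
  shows "f x = b"
proof (rule ccontr)
  assume "f x \<noteq> b"
  with assms(3,4) have "f x < b"
    by (simp add: order_le_neq_trans)
  then have "sum f A < (\<Sum>y\<in>A. b)"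
    using assms by (intro sum_strict_mono_ex1) auto
  then show False using assms(2) by simp
qed

lemma max_k_colorable_set_equitable:
  assumes "alpha_k n E k = k * alpha n E"
  obtains S col where "S \<subseteq> {0..<n}" "\<forall>i\<in>S. col i < k"
    "\<forall>i\<in>S. \<forall>j\<in>S. E i j \<longrightarrow> col i \<noteq> col j"
    "\<forall>c<k. card {i\<in>S. col i = c} = alpha n E"
proof -
  obtain S where S: "k_colorable_set n E k S" "card S = alpha_k n E k"
    by (rule alpha_k_attained)
  then obtain col where col: "\<forall>i\<in>S. col i < k" "\<forall>i\<in>S. \<forall>j\<in>S. E i j \<longrightarrow> col i \<noteq> col j"
    and sub: "S \<subseteq> {0..<n}"
    unfolding k_colorable_set_def by blast
  have "(\<Sum>c<k. card {i\<in>S. col i = c}) = card {..<k} * alpha n E"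
    using card_eq_sum_card_color_classes[OF finite_subset[OF sub] col(1)] S(2) assms by simp
  then have "\<forall>c<k. card {i\<in>S. col i = c} = alpha n E"
    using sum_eq_bound_imp_eq[of "{..<k}"] card_le_alpha color_class_stable[OF sub col(2)]
    by blast
  with sub col show ?thesis using that by blast
qed

section \<open>Colouring matrices\<close>

locale proper_coloring =
  fixes n :: nat and E :: "nat \<Rightarrow> nat \<Rightarrow> bool" and k :: nat
    and S :: "nat set" and col :: "nat \<Rightarrow> nat"
  assumes subset_vertices: "S \<subseteq> {0..<n}"
    and color_less: "\<forall>i\<in>S. col i < k"
    and proper: "\<forall>i\<in>S. \<forall>j\<in>S. E i j \<longrightarrow> col i \<noteq> col j"
begin

definition color_class :: "nat \<Rightarrow> nat set" where
  "color_class c = {i\<in>S. col i = c}"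

definition same_color :: "nat \<Rightarrow> nat \<Rightarrow> real" where
  "same_color = gram {..<k} (\<lambda>c. indicator (color_class c))"

text \<open>For \<open>k = 1\<close> there are no pairs of different color, and the denominator is \<open>0\<close>
  anyway (\<open>x / 0 = 0\<close>).\<close>

definition diff_color :: "nat \<Rightarrow> nat \<Rightarrow> real" where
  "diff_color i j = of_bool (i \<in> S \<and> j \<in> S \<and> col i \<noteq> col j) / (real k - 1)"

lemma same_color_eq: "same_color i j = of_bool (i \<in> S \<and> j \<in> S \<and> col i = col j)"
proof -
  have "same_color i j = (\<Sum>c<k. of_bool (c = col i \<and> i \<in> S \<and> j \<in> S \<and> col i = col j))"
    unfolding same_color_def gram_def
    by (intro sum.cong) (auto simp: color_class_def indicator_def)
  also have "\<dots> = of_bool (i \<in> S \<and> j \<in> S \<and> col i = col j)"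
    using color_less by (auto simp: of_bool_def sum.If_cases)
  finally show ?thesis .
qed

lemma same_color_diag: "same_color i i = indicator S i"
  by (simp add: same_color_eq indicator_def)

lemma sum_indicator_color_class: "(\<Sum>c<k. indicator (color_class c) i) = (indicator S i :: real)"
proof -
  have "indicator (color_class c) i * indicator (color_class c) i = (indicator (color_class c) i :: real)"
    for c by (simp add: indicator_def)
  with same_color_diag[of i] show ?thesis
    by (simp add: same_color_def gram_def)
qed

lemma symm_same_color: "symm n same_color"
  by (auto simp: symm_def same_color_eq)

lemma nonneg_same_color: "nonneg n same_color"
  by (simp add: nonneg_def same_color_eq)

lemma zero_on_edges_same_color: "zero_on_edges n E same_color"
  using proper by (auto simp: zero_on_edges_def same_color_eq)

lemma psd_same_color: "psd n same_color"
  unfolding same_color_def by (rule psd_gram)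

lemma trace_same_color: "trace_m n same_color = card S"
proof -
  have "{..<n} \<inter> {i. i \<in> S} = S"
    using subset_vertices by auto
  then show ?thesis
    by (simp add: trace_m_def same_color_diag indicator_def)
qed

lemma quad_form_same_color:
  "quad_form n same_color x = (\<Sum>c<k. (\<Sum>i\<in>color_class c. x i)\<^sup>2)"
proof -
  have "{..<n} \<inter> color_class c = color_class c" for c
    using subset_vertices by (auto simp: color_class_def)
  then show ?thesis
    by (simp add: same_color_def quad_form_gram)
qed

lemma theta3_feasible:
  "symm n same_color \<and> zero_on_edges n E same_color \<and> (\<forall>i<n. same_color i i \<le> 1) \<and>
   nonneg n same_color \<and> psd (n + 1) (bordered (real k) (\<lambda>i. same_color i i) same_color)"
proof -
  have "bordered (real k) (\<lambda>i. same_color i i) same_color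
      = gram {..<k} (\<lambda>c t. if t = 0 then 1 else indicator (color_class c) (t - 1))"
    using bordered_gram[of "{..<k}" "\<lambda>c. indicator (color_class c)"]
    by (simp add: same_color_diag sum_indicator_color_class flip: same_color_def)
  then show ?thesis
    by (simp add: symm_same_color zero_on_edges_same_color nonneg_same_color psd_gram
        same_color_diag)
qed

lemma sum_over_color_classes: "(\<Sum>i\<in>S. x i) = (\<Sum>c<k. \<Sum>i\<in>color_class c. x i)"
proof -
  have "finite (color_class c)" for c
    using finite_subset[of "color_class c" "{0..<n}"] subset_vertices
    by (auto simp: color_class_def)
  then have "sum x (\<Union>c<k. color_class c) = (\<Sum>c<k. sum x (color_class c))"
    by (intro sum.UNION_disjoint) (auto simp: color_class_def)
  moreover have "(\<Union>c<k. color_class c) = S"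
    using color_less by (auto simp: color_class_def)
  ultimately show ?thesis by simp
qed

lemma same_plus_diff_color:
  assumes "0 < k"
  shows "same_color i j + (real k - 1) * diff_color i j = indicator S i * indicator S j"
proof (cases "k = 1")
  case True
  then have "\<forall>i\<in>S. col i = 0"
    using color_less by auto
  then show ?thesis
    unfolding same_color_eq diff_color_def using True by (auto simp: indicator_def)
next
  case False
  with assms have "real k - 1 \<noteq> 0" by simp
  then show ?thesis
    by (cases "i \<in> S"; cases "j \<in> S"; cases "col i = col j")
      (simp_all add: same_color_eq diff_color_def)
qed

lemma psd_same_minus_diff_color:
  assumes "0 < k"
  shows "psd n (\<lambda>i j. same_color i j - diff_color i j)"
proof -
  have "0 \<le> quad_form n (\<lambda>i j. same_color i j - diff_color i j) x" for x
  proof (cases "k = 1")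
    case True
    then have "diff_color = (\<lambda>i j. 0)"
      unfolding diff_color_def by (simp add: fun_eq_iff)
    then show ?thesis
      using psd_same_color by (simp add: psd_iff_quad_form)
  next
    case False
    with assms have k_gt_1: "1 < real k" by simp
    define y where "y c = (\<Sum>i\<in>color_class c. x i)" for c
    define Q where "Q = (\<Sum>c<k. (y c)\<^sup>2)"
    have "quad_form n (\<lambda>i j. indicator S i * indicator S j) x = (\<Sum>i\<in>S. x i)\<^sup>2"
      using quad_form_gram[of n "{()}" "\<lambda>_. indicator S" x] subset_vertices
      by (simp add: gram_singleton Int_absorb1 lessThan_atLeast0)
    then have "quad_form n (\<lambda>i j. indicator S i * indicator S j) x = (\<Sum>c<k. y c)\<^sup>2"
      by (simp add: sum_over_color_classes y_def)
    moreover have "(\<lambda>i j. indicator S i * indicator S j)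
        = (\<lambda>i j. 1 * same_color i j + (real k - 1) * diff_color i j)"
      by (simp add: same_plus_diff_color[OF assms])
    then have "quad_form n (\<lambda>i j. indicator S i * indicator S j) x
        = quad_form n same_color x + (real k - 1) * quad_form n diff_color x"
      by (simp only: quad_form_lincomb)
    moreover have "quad_form n same_color x = Q"
      by (simp add: quad_form_same_color Q_def y_def)
    moreover have "(\<Sum>c<k. y c)\<^sup>2 \<le> real k * Q"
      using sum_squared_le_sum_of_squares[of y "{..<k}"] by (simp add: Q_def mult.commute)
    ultimately have "0 \<le> (real k - 1) * quad_form n (\<lambda>i j. same_color i j - diff_color i j) x"
      by (simp add: quad_form_diff algebra_simps)
    with k_gt_1 show ?thesis
      by (simp add: zero_le_mult_iff)
  qed
  moreover have "symm n (\<lambda>i j. same_color i j - diff_color i j)"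
    by (auto simp: symm_def same_color_eq diff_color_def)
  ultimately show ?thesis
    by (simp add: psd_iff_quad_form)
qed

lemma theta1_feasible:
  assumes "0 < k"
  shows "theta2_feas n E k same_color diff_color
    \<and> (\<forall>i<n. \<forall>j<n. i > j \<longrightarrow>
          1 - same_color i i - same_color j j + same_color i j + (real k - 1) * diff_color i j \<ge> 0)
    \<and> (\<forall>i<n. \<forall>j<n. i \<noteq> j \<longrightarrow>
          same_color i i - same_color i j - (real k - 1) * diff_color i j \<ge> 0)"
proof -
  have plus: "same_color i j + (real k - 1) * diff_color i j = indicator S i * indicator S j" for i j
    using same_plus_diff_color[OF assms] .
  have "bordered 1 (\<lambda>i. same_color i i) (\<lambda>i j. same_color i j + (real k - 1) * diff_color i j)
      = gram {()} (\<lambda>_ t. if t = 0 then 1 else indicator S (t - 1))"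
    using bordered_gram[of "{()}" "\<lambda>_. indicator S"]
    by (simp add: plus same_color_diag gram_singleton)
  then have "psd (n + 1)
      (bordered 1 (\<lambda>i. same_color i i) (\<lambda>i j. same_color i j + (real k - 1) * diff_color i j))"
    by (simp add: psd_gram)
  moreover have "symm n diff_color" "nonneg n diff_color" "\<forall>i<n. diff_color i i = 0"
    using assms by (auto simp: symm_def nonneg_def diff_color_def)
  moreover have "1 - same_color i i - same_color j j + same_color i j + (real k - 1) * diff_color i j
      = (1 - indicator S i) * (1 - indicator S j)" for i j
    using plus[of i j] by (simp add: same_color_diag algebra_simps)
  moreover have "same_color i i - same_color i j - (real k - 1) * diff_color i j
      = indicator S i * (1 - indicator S j)" for i j
    using plus[of i j] by (simp add: same_color_diag algebra_simps)
  ultimately show ?thesis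
    using psd_same_minus_diff_color[OF assms]
    by (simp add: theta2_feas_def symm_same_color zero_on_edges_same_color nonneg_same_color)
qed

end

locale equitable_coloring = proper_coloring +
  fixes a :: nat
  assumes card_color_class: "\<forall>c<k. card {i\<in>S. col i = c} = a"
    and class_size_pos: "0 < a"
begin

lemma card_S_eq: "card S = k * a"
  using card_eq_sum_card_color_classes[of S col k] subset_vertices color_less card_color_class
  by (simp add: finite_subset)

lemma quad_form_same_color_le:
  fixes x :: "nat \<Rightarrow> real"
  shows "quad_form n same_color x \<le> a * (\<Sum>i<n. (x i)\<^sup>2)"
proof -
  have "quad_form n same_color x = (\<Sum>c<k. (\<Sum>i\<in>color_class c. x i)\<^sup>2)"
    by (rule quad_form_same_color)
  also have "\<dots> \<le> (\<Sum>c<k. a * (\<Sum>i\<in>color_class c. (x i)\<^sup>2))"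
  proof (rule sum_mono)
    fix c assume "c \<in> {..<k}"
    then show "(\<Sum>i\<in>color_class c. x i)\<^sup>2 \<le> a * (\<Sum>i\<in>color_class c. (x i)\<^sup>2)"
      using sum_squared_le_sum_of_squares[of x "color_class c"] card_color_class
      by (simp add: color_class_def mult.commute)
  qed
  also have "\<dots> = a * (\<Sum>i\<in>S. (x i)\<^sup>2)"
    by (simp add: sum_over_color_classes sum_distrib_left)
  also have "\<dots> \<le> a * (\<Sum>i<n. (x i)\<^sup>2)"
    using subset_vertices by (intro mult_left_mono sum_mono2) auto
  finally show ?thesis .
qed

lemma sum_all_same_color: "sum_all n same_color = real k * (real a)\<^sup>2"
proof -
  have "finite (color_class c)" for c
    using finite_subset[of "color_class c" "{0..<n}"] subset_vertices
    by (auto simp: color_class_def)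
  then show ?thesis
    using card_color_class
    by (simp add: sum_all_eq_quad_form quad_form_same_color color_class_def)
qed

lemma vartheta_feasible:
  defines "Z \<equiv> \<lambda>i j. same_color i j / real a"
  shows "symm n Z \<and> zero_on_edges n E Z \<and> trace_m n Z = real k \<and> psd n Z
      \<and> psd n (\<lambda>i j. idm i j - Z i j) \<and> nonneg n Z"
    and "sum_all n Z = real k * real a"
proof -
  have quad_Z: "quad_form n Z x = quad_form n same_color x / a" for x
    using quad_form_lincomb[of n "1 / a" same_color 0 same_color x] by (simp add: Z_def)
  have "trace_m n Z = real k"
    using trace_same_color card_S_eq class_size_pos
    by (simp add: Z_def trace_m_def flip: sum_divide_distrib)
  moreover have "psd n (\<lambda>i j. idm i j - Z i j)"
  proof -
    have "0 \<le> quad_form n (\<lambda>i j. idm i j - Z i j) x" for x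
      using quad_form_same_color_le[of x] class_size_pos
      by (simp add: quad_form_diff quad_form_idm quad_Z field_simps)
    moreover have "symm n (\<lambda>i j. idm i j - Z i j)"
      using symm_same_color by (simp add: symm_def idm_def Z_def)
    ultimately show ?thesis
      by (simp add: psd_iff_quad_form)
  qed
  moreover have "psd n Z"
    unfolding Z_def using psd_scale[OF psd_same_color, of "1 / a"] by simp
  ultimately show "symm n Z \<and> zero_on_edges n E Z \<and> trace_m n Z = real k \<and> psd n Z
      \<and> psd n (\<lambda>i j. idm i j - Z i j) \<and> nonneg n Z"
    using symm_same_color zero_on_edges_same_color nonneg_same_color
    by (simp add: Z_def symm_def zero_on_edges_def nonneg_def)
  show "sum_all n Z = real k * real a"
    using sum_all_same_color class_size_pos
    by (simp add: Z_def sum_all_def power2_eq_square flip: sum_divide_distrib)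
qed

end

section \<open>Values of the relaxations\<close>

lemma Sup_setcompr_eqI:
  fixes f :: "'a \<Rightarrow> real"
  assumes "P w" "f w = v" "\<And>Z. P Z \<Longrightarrow> f Z \<le> v"
  shows "Sup {f Z | Z. P Z} = v"
  using assms by (intro cSup_eq_maximum) auto

lemma Sup_setcompr2_eqI:
  fixes f :: "'a \<Rightarrow> real"
  assumes "P w u" "f w = v" "\<And>Z X. P Z X \<Longrightarrow> f Z \<le> v"
  shows "Sup {f Z | Z X. P Z X} = v"
  using assms by (intro cSup_eq_maximum) auto

lemma alpha_le_lovasz_theta:
  assumes "0 < alpha n E"
  shows "real (alpha n E) \<le> lovasz_theta n E"
proof -
  obtain S where S: "stable_set n E S" "card S = alpha n E"
    by (rule alpha_attained)
  interpret equitable_coloring n E 1 S "\<lambda>_. 0" "alpha n E"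
    using S assms by unfold_locales (auto simp: stable_set_def)
  define Z where "Z = (\<lambda>i j. same_color i j / real (alpha n E))"
  have "zero_on_edges n E Z" "psd n Z" "trace_m n Z = 1" "sum_all n Z = alpha n E"
    using vartheta_feasible by (simp_all add: Z_def)
  then show ?thesis
    using sum_all_le_lovasz_theta_mult_trace[of n E Z] by simp
qed

context equitable_coloring
begin

lemma vartheta_k_values:
  assumes "lovasz_theta n E = a"
  shows "vartheta_k n E k = k * a" "vartheta'_k n E k = k * a"
proof -
  have bound: "sum_all n Z \<le> k * a" if "zero_on_edges n E Z" "psd n Z" "trace_m n Z = k" for Z
    using sum_all_le_lovasz_theta_mult_trace[OF that(1,2)] that(3) assms by (simp add: mult.commute)
  show "vartheta_k n E k = k * a"
    unfolding vartheta_k_def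
    by (rule Sup_setcompr_eqI[where w = "\<lambda>i j. same_color i j / a"])
      (use vartheta_feasible bound in auto)
  show "vartheta'_k n E k = k * a"
    unfolding vartheta'_k_def
    by (rule Sup_setcompr_eqI[where w = "\<lambda>i j. same_color i j / a"])
      (use vartheta_feasible bound in auto)
qed

lemma theta_k_values:
  assumes "lovasz_theta n E = a" "0 < k"
  shows "theta1_k n E k = k * a" "theta2_k n E k = k * a" "theta3_k n E k = k * a"
proof -
  have trace: "trace_m n same_color = k * a"
    by (simp add: trace_same_color card_S_eq)
  have theta_nonneg: "0 \<le> lovasz_theta n E"
    using assms(1) by simp
  show "theta1_k n E k = k * a"
    unfolding theta1_k_def
    by (rule Sup_setcompr2_eqI[where w = same_color and u = diff_color])
      (use theta1_feasible[OF assms(2)] theta2_trace_le[OF _ assms(2) theta_nonneg] trace assms(1)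
        in auto)
  show "theta2_k n E k = k * a"
    unfolding theta2_k_def
    by (rule Sup_setcompr2_eqI[where w = same_color and u = diff_color])
      (use theta1_feasible[OF assms(2)] theta2_trace_le[OF _ assms(2) theta_nonneg] trace assms(1)
        in auto)
  show "theta3_k n E k = k * a"
    unfolding theta3_k_def
    by (rule Sup_setcompr_eqI[where w = same_color])
      (use theta3_feasible theta3_trace_le[OF _ _ assms(2) theta_nonneg] trace assms(1) in auto)
qed

end

theorem lemma5:
  fixes n k :: nat and E :: "nat \<Rightarrow> nat \<Rightarrow> bool"
  assumes "n \<ge> 1"
    and "\<forall>i<n. \<forall>j<n. E i j \<longleftrightarrow> E j i"
    and "\<forall>i<n. \<not> E i i"
    and "k \<ge> 1"
    and "real (alpha_k n E k) = real k * lovasz_theta n E"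
  shows "vartheta_k n E k = vartheta'_k n E k
       \<and> vartheta'_k n E k = theta1_k n E k
       \<and> theta1_k n E k = theta2_k n E k
       \<and> theta2_k n E k = theta3_k n E k
       \<and> theta3_k n E k = real k * real (alpha n E)
       \<and> real k * real (alpha n E) = real (alpha_k n E k)"
proof -
  define a where "a = alpha n E"
  have "0 < a"
    using alpha_pos[of 0 n E] assms(1,3) by (simp add: a_def)
  have "real (alpha_k n E k) \<le> real k * a"
    using alpha_k_le_mult_alpha[of n E k] by (simp add: a_def flip: of_nat_mult)
  moreover have "real k * a \<le> real k * lovasz_theta n E"
    using alpha_le_lovasz_theta[of n E] \<open>0 < a\<close> by (intro mult_left_mono) (simp_all add: a_def)
  ultimately have "real (alpha_k n E k) = real k * a" "real k * lovasz_theta n E = real k * a"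
    using assms(5) by linarith+
  then have alpha_k: "alpha_k n E k = k * a" and theta: "lovasz_theta n E = a"
    using assms(4) by (metis of_nat_eq_iff of_nat_mult, simp)
  obtain S col where "S \<subseteq> {0..<n}" "\<forall>i\<in>S. col i < k"
      "\<forall>i\<in>S. \<forall>j\<in>S. E i j \<longrightarrow> col i \<noteq> col j" "\<forall>c<k. card {i\<in>S. col i = c} = a"
    using max_k_colorable_set_equitable alpha_k unfolding a_def by blast
  then interpret equitable_coloring n E k S col a
    using \<open>0 < a\<close> by unfold_locales
  show ?thesis
    using vartheta_k_values[OF theta] theta_k_values[OF theta] assms(4) alpha_k
    by (simp add: a_def)
qed

end
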